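(* Let $A$ be a set and let $\alpha,\beta$ be quasiorders on $A$. The following are equivalent: (1) $\alpha\cap\beta=\Delta_A$ and $\alpha\cup\beta=A\times A$; (2) $\alpha\cap\beta=\Delta_A$ and $(\alpha\cap\gamma)\vee(\beta\cap\gamma)=\gamma$ for every quasiorder $\gamma$ on $A$.
   Context: A quasiorder on a set $A$ is a reflexive and transitive binary relation on $A$; $\Delta_A=\{(a,a)\mid a\in A\}$. The set $\mathrm{Quord}(A)$ of all quasiorders on $A$ is a complete lattice under inclusion; $\cap$ is intersection and $\gamma_1\vee\gamma_2$ denotes the join in this lattice, i.e. the smallest quasiorder containing $\gamma_1\cup\gamma_2$ (the transitive closure of $\gamma_1\cup\gamma_2$). *)

theory Defs
  imports Main
begin

definition quasiorder_on :: "'a set \<Rightarrow> ('a \<times> 'a) set \<Rightarrow> bool" where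
  "quasiorder_on A r \<longleftrightarrow> r \<subseteq> A \<times> A \<and> refl_on A r \<and> trans r"

definition quord_join :: "'a set \<Rightarrow> ('a \<times> 'a) set \<Rightarrow> ('a \<times> 'a) set \<Rightarrow> ('a \<times> 'a) set" where
  "quord_join A r s = \<Inter>{q. quasiorder_on A q \<and> r \<union> s \<subseteq> q}"

end

theory Submission
  imports Defs
begin

(* If \<alpha> \<union> \<beta> covers A \<times> A,
   then every \<gamma> is already the union of \<alpha> \<inter> \<gamma> and \<beta> \<inter> \<gamma>.  Conversely, a pair (a, b)
   outside \<alpha> \<union> \<beta> is detected by the quasiorder \<gamma> = Id_on A \<union> {(a, b)}: both \<alpha> \<inter> \<gamma>
   and \<beta> \<inter> \<gamma> lie in Id_on A, hence so does their join, which forces a = b,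
   contradicting reflexivity of \<alpha>. *)

lemma quord_join_upper: "r \<union> s \<subseteq> quord_join A r s"
  unfolding quord_join_def by blast

lemma quord_join_least:
  "quasiorder_on A q \<Longrightarrow> r \<union> s \<subseteq> q \<Longrightarrow> quord_join A r s \<subseteq> q"
  unfolding quord_join_def by blast

lemma quord_join_eq_Un:
  "quasiorder_on A (r \<union> s) \<Longrightarrow> quord_join A r s = r \<union> s"
  by (intro subset_antisym quord_join_least quord_join_upper subset_refl)

lemma quasiorder_on_Id_on: "quasiorder_on A (Id_on A)"
  unfolding quasiorder_on_def refl_on_def trans_def by auto

lemma quasiorder_on_insert_Id_on:
  "a \<in> A \<Longrightarrow> b \<in> A \<Longrightarrow> quasiorder_on A (insert (a, b) (Id_on A))"
  unfolding quasiorder_on_def refl_on_def trans_def by auto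

lemma quord_join_Int_if_Un_eq_Times:
  assumes "\<alpha> \<union> \<beta> = A \<times> A" and "quasiorder_on A \<gamma>"
  shows "quord_join A (\<alpha> \<inter> \<gamma>) (\<beta> \<inter> \<gamma>) = \<gamma>"
proof -
  have "(\<alpha> \<inter> \<gamma>) \<union> (\<beta> \<inter> \<gamma>) = \<gamma>"
    using assms unfolding quasiorder_on_def by blast
  with assms(2) show ?thesis
    using quord_join_eq_Un[of A "\<alpha> \<inter> \<gamma>" "\<beta> \<inter> \<gamma>"] by simp
qed

lemma Un_eq_Times_if_quord_join_Int:
  assumes \<alpha>: "quasiorder_on A \<alpha>" and \<beta>: "quasiorder_on A \<beta>"
    and join: "\<And>\<gamma>. quasiorder_on A \<gamma> \<Longrightarrow> quord_join A (\<alpha> \<inter> \<gamma>) (\<beta> \<inter> \<gamma>) = \<gamma>"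
  shows "\<alpha> \<union> \<beta> = A \<times> A"
proof
  show "\<alpha> \<union> \<beta> \<subseteq> A \<times> A"
    using \<alpha> \<beta> unfolding quasiorder_on_def by blast
next
  show "A \<times> A \<subseteq> \<alpha> \<union> \<beta>"
  proof (rule ccontr)
    assume "\<not> A \<times> A \<subseteq> \<alpha> \<union> \<beta>"
    then obtain a b where ab: "a \<in> A" "b \<in> A" "(a, b) \<notin> \<alpha>" "(a, b) \<notin> \<beta>"
      by auto
    define \<gamma> where "\<gamma> = insert (a, b) (Id_on A)"
    have "(\<alpha> \<inter> \<gamma>) \<union> (\<beta> \<inter> \<gamma>) \<subseteq> Id_on A"
      using ab unfolding \<gamma>_def by blast
    then have "quord_join A (\<alpha> \<inter> \<gamma>) (\<beta> \<inter> \<gamma>) \<subseteq> Id_on A"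
      using quord_join_least[OF quasiorder_on_Id_on] by blast
    moreover have "quord_join A (\<alpha> \<inter> \<gamma>) (\<beta> \<inter> \<gamma>) = \<gamma>"
      using join quasiorder_on_insert_Id_on[OF ab(1,2)] unfolding \<gamma>_def by blast
    ultimately have "a = b"
      unfolding \<gamma>_def by blast
    then show False
      using ab \<alpha> unfolding quasiorder_on_def refl_on_def by blast
  qed
qed

lemma Un_eq_Times_iff_quord_join_Int:
  assumes "quasiorder_on A \<alpha>" and "quasiorder_on A \<beta>"
  shows "\<alpha> \<union> \<beta> = A \<times> A \<longleftrightarrow>
         (\<forall>\<gamma>. quasiorder_on A \<gamma> \<longrightarrow> quord_join A (\<alpha> \<inter> \<gamma>) (\<beta> \<inter> \<gamma>) = \<gamma>)"
  using quord_join_Int_if_Un_eq_Times Un_eq_Times_if_quord_join_Int[OF assms] by blast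

theorem proposition2p1:
  fixes A :: "'a set" and \<alpha> \<beta> :: "('a \<times> 'a) set"
  assumes "quasiorder_on A \<alpha>" and "quasiorder_on A \<beta>"
  shows "(\<alpha> \<inter> \<beta> = Id_on A \<and> \<alpha> \<union> \<beta> = A \<times> A) \<longleftrightarrow>
         (\<alpha> \<inter> \<beta> = Id_on A \<and>
          (\<forall>\<gamma>. quasiorder_on A \<gamma> \<longrightarrow> quord_join A (\<alpha> \<inter> \<gamma>) (\<beta> \<inter> \<gamma>) = \<gamma>))"
  using Un_eq_Times_iff_quord_join_Int[OF assms] by blast

end
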